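(* Let $\mathcal V$ be a finite vocabulary and $C\ge 2$ an integer. For each $i\in\{1,\dots,C\}$ let $w_i:\mathcal V\to\mathbb R$ be arbitrary maps such that there exist a token $\tau\in\mathcal V$ and an index $i\in\{2,\dots,C\}$ with $w_i(\tau)\neq 0$, and let $b\in\mathbb R$. Then there is no parametrization of a single-layer transformer $F$ (with $L=1$, any number $H\ge 1$ of heads, either encoder-only or decoder-only) such that for every sequence $\mathbf t=[t_1,\dots,t_{|\mathbf t|}]$ over $\mathcal V$ with $1\le|\mathbf t|\le C$, $$F(\mathbf t)=b+\sum_{i=1}^{|\mathbf t|} w_i(t_i).$$
   Context: Let $\mathcal V$ be a finite vocabulary and $C\ge 2$ the context length; inputs are sequences $\mathbf t=[t_1,\dots,t_{|\mathbf t|}]$ with $t_i\in\mathcal V$ and $1\le|\mathbf t|\le C$. An $L$-layer transformer (without positional embeddings) with embedding dimension $d$, head dimension $d_h$ and $H\ge 1$ heads per layer is specified by: an embedding map $e:\mathcal V\to\mathbb R^d$; for each layer $l\in\{1,\dots,L\}$ and head $h\in\{1,\dots,H\}$, matrices $W_Q^{(l,h)},W_K^{(l,h)},W_V^{(l,h)}\in\mathbb R^{d\times d_h}$, vectors $b_Q^{(l,h)},b_K^{(l,h)},b_V^{(l,h)}\in\mathbb R^{d_h}$ and a linear map $P_{l,h}:\mathbb R^{d_h}\to\mathbb R^d$; for each layer an arbitrary function $\mathrm{ffn}_l:\mathbb R^d\to\mathbb R^d$; and an arbitrary classification head $\mathrm{cls}:\mathbb R^d\to\mathbb R^2$. A parametrization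 is any choice of all these objects. On input $\mathbf t$, set $h_i^{(0)}=e(t_i)$. In layer $l$, for each head $h$ compute $q_i=(W_Q^{(l,h)})^\top h_i^{(l-1)}+b_Q^{(l,h)}$, $k_i=(W_K^{(l,h)})^\top h_i^{(l-1)}+b_K^{(l,h)}$, $v_i=(W_V^{(l,h)})^\top h_i^{(l-1)}+b_V^{(l,h)}$; attention weights $a_{ij}=\exp(q_i^\top k_j/\sqrt{d_h})/\sum_{j'\in J_i}\exp(q_i^\top k_{j'}/\sqrt{d_h})$ for $j\in J_i$ and $a_{ij}=0$ for $j\notin J_i$, where $J_i=\{1,\dots,|\mathbf t|\}$ for an encoder-only model and $J_i=\{1,\dots,i\}$ for a decoder-only model (causal mask); head output $s_i^{(h)}=\sum_{j} a_{ij}v_j$. Then $h_i^{(l)}=\mathrm{ffn}_l\big(h_i^{(l-1)}+\sum_{h=1}^H P_{l,h}(s_i^{(h)})\big)$. The output (log odds) is $F(\mathbf t)=\Delta(\mathrm{cls}(h_r^{(L)}))$, where $\Delta(\ell)=\ell_1-\ell_0$ for $\ell=(\ell_0,\ell_1)\in\mathbb R^2$, and $r=1$ for encoder-only models, $r=|\mathbf t|$ for decoder-only models. *)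

theory Defs
  imports "HOL-Analysis.Analysis"
begin

text \<open>Transformers without positional embeddings. Vectors in R^d / R^{d_h} are
  represented as real^'d / real^'h for finite index types 'd, 'h (so d = CARD('d),
  d_h = CARD('h)); heads are indexed by a finite type 'k (H = CARD('k)).
  A d x d_h matrix W is an element of real^'h^'d; the map x |-> W^T x + b is
  transpose W *v x + b.  P_{l,h} : R^{d_h} -> R^d is a matrix in real^'h^'d.
  Positions are 0-indexed internally: position i (0-based) is token t_{i+1}.\<close>

text \<open>Output of one attention head at (0-based) position i.
  dec = True: decoder-only (causal mask J_i = {1..i}); dec = False: encoder-only.\<close>
definition head_out ::
  "bool \<Rightarrow> real^'h^'d \<Rightarrow> real^'h^'d \<Rightarrow> real^'h^'d \<Rightarrow> real^'h \<Rightarrow> real^'h \<Rightarrow> real^'h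
   \<Rightarrow> (real^'d::finite) list \<Rightarrow> nat \<Rightarrow> real^'h::finite" where
  "head_out dec WQ WK WV bQ bK bV xs i =
     (let J = (if dec then {0..i} else {0..<length xs});
          q = (\<lambda>j. transpose WQ *v (xs ! j) + bQ);
          k = (\<lambda>j. transpose WK *v (xs ! j) + bK);
          v = (\<lambda>j. transpose WV *v (xs ! j) + bV);
          sc = (\<lambda>j. exp ((q i \<bullet> k j) / sqrt (real CARD('h))))
      in (\<Sum>j\<in>J. (sc j / (\<Sum>j'\<in>J. sc j')) *\<^sub>R v j))"

definition tf_layer ::
  "bool \<Rightarrow> ('k::finite \<Rightarrow> real^'h^'d) \<Rightarrow> ('k \<Rightarrow> real^'h^'d) \<Rightarrow> ('k \<Rightarrow> real^'h^'d)
   \<Rightarrow> ('k \<Rightarrow> real^'h) \<Rightarrow> ('k \<Rightarrow> real^'h) \<Rightarrow> ('k \<Rightarrow> real^'h)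
   \<Rightarrow> ('k \<Rightarrow> real^'h::finite^'d::finite) \<Rightarrow> (real^'d \<Rightarrow> real^'d)
   \<Rightarrow> (real^'d) list \<Rightarrow> (real^'d) list" where
  "tf_layer dec WQ WK WV bQ bK bV P ffn xs =
     map (\<lambda>i. ffn (xs ! i + (\<Sum>hd\<in>UNIV.
                 P hd *v head_out dec (WQ hd) (WK hd) (WV hd) (bQ hd) (bK hd) (bV hd) xs i)))
         [0..<length xs]"

text \<open>Output log-odds F(t) of an L-layer transformer; layer parameters are indexed by
  l \<in> {1..L}. cls maps to R^2 = pairs (l0, l1), and Delta(l0,l1) = l1 - l0.
  Readout position r = 1 (encoder) or r = |t| (decoder).\<close>
definition tf_output ::
  "bool \<Rightarrow> nat \<Rightarrow> ('v \<Rightarrow> real^'d)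
   \<Rightarrow> (nat \<Rightarrow> 'k::finite \<Rightarrow> real^'h^'d) \<Rightarrow> (nat \<Rightarrow> 'k \<Rightarrow> real^'h^'d) \<Rightarrow> (nat \<Rightarrow> 'k \<Rightarrow> real^'h^'d)
   \<Rightarrow> (nat \<Rightarrow> 'k \<Rightarrow> real^'h) \<Rightarrow> (nat \<Rightarrow> 'k \<Rightarrow> real^'h) \<Rightarrow> (nat \<Rightarrow> 'k \<Rightarrow> real^'h)
   \<Rightarrow> (nat \<Rightarrow> 'k \<Rightarrow> real^'h::finite^'d::finite) \<Rightarrow> (nat \<Rightarrow> real^'d \<Rightarrow> real^'d)
   \<Rightarrow> (real^'d \<Rightarrow> real \<times> real) \<Rightarrow> 'v list \<Rightarrow> real" where
  "tf_output dec L e WQ WK WV bQ bK bV P ffn cls ts =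
     (let hL = foldl (\<lambda>hs l. tf_layer dec (WQ l) (WK l) (WV l) (bQ l) (bK l) (bV l) (P l) (ffn l) hs)
                     (map e ts) [1..<Suc L];
          r = (if dec then length ts - 1 else 0);
          out = cls (hL ! r)
      in snd out - fst out)"

end

theory Submission
  imports Defs
begin

text \<open>Without positional embeddings, every attention head averages its values with
  weights summing to one, so on a constant sequence \<open>\<tau>\<^sup>n\<close> every position carries the
  same vector and that vector does not depend on \<open>n\<close>. Hence \<open>F(\<tau>\<^sup>n) = F(\<tau>)\<close> for all
  \<open>n \<ge> 1\<close>, whereas the target \<open>b + w\<^sub>1(\<tau>) + \<dots> + w\<^sub>n(\<tau>)\<close> changes by \<open>w\<^sub>i(\<tau>) \<noteq> 0\<close> between
  \<open>n = i - 1\<close> and \<open>n = i\<close>.\<close>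

lemma sum_normalized_scaleR_const:
  fixes v :: "'a::real_vector"
  assumes "(\<Sum>j\<in>J. s j) \<noteq> 0"
  shows "(\<Sum>j\<in>J. (s j / (\<Sum>j'\<in>J. s j')) *\<^sub>R v) = v"
proof -
  have "(\<Sum>j\<in>J. s j / (\<Sum>j'\<in>J. s j')) = 1"
    using assms by (simp add: sum_divide_distrib[symmetric])
  then show ?thesis
    by (simp add: scaleR_sum_left[symmetric])
qed

lemma head_out_replicate:
  assumes "i < n"
  shows "head_out dec WQ WK WV bQ bK bV (replicate n x) i = transpose WV *v x + bV"
proof -
  define J where "J = (if dec then {0..i} else {0..<n})"
  define s :: "nat \<Rightarrow> real" where
    "s j = exp (((transpose WQ *v x + bQ) \<bullet> (transpose WK *v x + bK)) / sqrt (real CARD('a)))"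
    for j
  have "J \<noteq> {}" "finite J"
    using assms by (auto simp: J_def)
  then have "(\<Sum>j\<in>J. s j) \<noteq> 0"
    by (metis exp_gt_zero less_irrefl s_def sum_pos)
  moreover have "head_out dec WQ WK WV bQ bK bV (replicate n x) i =
      (\<Sum>j\<in>J. (s j / (\<Sum>j'\<in>J. s j')) *\<^sub>R (transpose WV *v x + bV))"
    unfolding head_out_def Let_def J_def[symmetric] length_replicate
    using assms by (intro sum.cong) (auto simp: J_def s_def split: if_splits)
  ultimately show ?thesis
    by (simp add: sum_normalized_scaleR_const)
qed

lemma tf_layer_replicate:
  "tf_layer dec WQ WK WV bQ bK bV P ffn (replicate n x) =
     replicate n (ffn (x + (\<Sum>hd\<in>UNIV. P hd *v (transpose (WV hd) *v x + bV hd))))"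
  unfolding tf_layer_def
  by (rule nth_equalityI) (simp_all add: head_out_replicate)

lemma foldl_replicate:
  assumes "\<And>l m x. f (replicate m x) l = replicate m (g l x)"
  shows "foldl f (replicate n x) ls = replicate n (foldl (\<lambda>y l. g l y) x ls)"
  using assms by (induction ls arbitrary: x) simp_all

theorem tf_output_replicate:
  assumes "n \<ge> 1"
  shows "tf_output dec L e WQ WK WV bQ bK bV P ffn cls (replicate n t) =
         tf_output dec L e WQ WK WV bQ bK bV P ffn cls [t]"
proof -
  have stack: "foldl (\<lambda>hs l. tf_layer dec (WQ l) (WK l) (WV l) (bQ l) (bK l) (bV l) (P l) (ffn l) hs)
          (replicate m (e t)) ls =
        replicate m (foldl (\<lambda>x l. ffn l (x + (\<Sum>hd\<in>UNIV.
          P l hd *v (transpose (WV l hd) *v x + bV l hd)))) (e t) ls)" for m ls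
    by (rule foldl_replicate) (rule tf_layer_replicate)
  show ?thesis
    using stack[where m = n] stack[where m = 1] assms
    by (simp add: tf_output_def Let_def del: upt_Suc)
qed

lemma replicate_invariant_not_position_sum:
  fixes w :: "nat \<Rightarrow> 'v \<Rightarrow> real"
  assumes replicate: "\<And>n. n \<ge> 1 \<Longrightarrow> F (replicate n \<tau>) = F [\<tau>]"
    and "2 \<le> i" "i \<le> C" "w i \<tau> \<noteq> 0"
    and F: "\<forall>ts. 1 \<le> length ts \<and> length ts \<le> C \<longrightarrow>
              F ts = b + (\<Sum>k=1..length ts. w k (ts ! (k - 1)))"
  shows False
proof -
  have F_replicate: "F [\<tau>] = b + (\<Sum>k=1..n. w k \<tau>)" if "1 \<le> n" "n \<le> C" for n
  proof -
    have "(\<Sum>k=1..n. w k (replicate n \<tau> ! (k - 1))) = (\<Sum>k=1..n. w k \<tau>)"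
      by (rule sum.cong) auto
    with F[rule_format, of "replicate n \<tau>"] replicate[of n] that show ?thesis
      by simp
  qed
  have "(\<Sum>k=1..i. w k \<tau>) = (\<Sum>k=1..i-1. w k \<tau>) + w i \<tau>"
    using \<open>2 \<le> i\<close> by (cases i) (auto simp: sum.atLeast1_atMost_eq)
  with F_replicate[of i] F_replicate[of "i - 1"] assms(2-4) show False
    by simp
qed

theorem proposition4p1:
  fixes C :: nat and w :: "nat \<Rightarrow> 'v::finite \<Rightarrow> real" and b :: real and dec :: bool
  assumes "C \<ge> 2"
    and "\<exists>\<tau> i. i \<in> {2..C} \<and> w i \<tau> \<noteq> 0"
  shows "\<not> (\<exists>(e :: 'v \<Rightarrow> real^'d::finite)
              (WQ :: nat \<Rightarrow> 'k::finite \<Rightarrow> real^'h::finite^'d) (WK :: nat \<Rightarrow> 'k \<Rightarrow> real^'h^'d)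
              (WV :: nat \<Rightarrow> 'k \<Rightarrow> real^'h^'d)
              (bQ :: nat \<Rightarrow> 'k \<Rightarrow> real^'h) (bK :: nat \<Rightarrow> 'k \<Rightarrow> real^'h) (bV :: nat \<Rightarrow> 'k \<Rightarrow> real^'h)
              (P :: nat \<Rightarrow> 'k \<Rightarrow> real^'h^'d) (ffn :: nat \<Rightarrow> real^'d \<Rightarrow> real^'d)
              (cls :: real^'d \<Rightarrow> real \<times> real).
           \<forall>ts :: 'v list. 1 \<le> length ts \<and> length ts \<le> C \<longrightarrow>
              tf_output dec 1 e WQ WK WV bQ bK bV P ffn cls ts
                = b + (\<Sum>i=1..length ts. w i (ts ! (i - 1))))"
proof (intro notI, elim exE)
  obtain \<tau> i where "2 \<le> i" "i \<le> C" "w i \<tau> \<noteq> 0"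
    using assms(2) by auto
  then show False
    if "\<forall>ts. 1 \<le> length ts \<and> length ts \<le> C \<longrightarrow>
      tf_output dec 1 e WQ WK WV bQ bK bV P ffn cls ts = b + (\<Sum>i=1..length ts. w i (ts ! (i - 1)))"
    for e :: "'v \<Rightarrow> real^'d" and WQ :: "nat \<Rightarrow> 'k \<Rightarrow> real^'h^'d" and WK WV bQ bK bV P ffn cls
    using replicate_invariant_not_position_sum[OF tf_output_replicate _ _ _ that] by blast
qed

end
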